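(* For all integers $n\geq0$, \[ \sum_{j=0}^n\binom{2j}{j}\frac{O_j-H_{n-j}}{4^j(n+1-j)}=0. \]
   Context: $H_n=\sum_{j=1}^n\frac1j$ ($H_0=0$) and $O_n=\sum_{j=1}^n\frac1{2j-1}$ ($O_0=0$). *)

theory Defs
  imports "HOL-Analysis.Analysis"
begin

definition oharm :: "nat \<Rightarrow> real" where
  "oharm n = (\<Sum>j=1..n. 1 / (2 * real j - 1))"

end

theory Submission
  imports Defs "HOL-Computational_Algebra.Formal_Power_Series"
begin

text \<open>Let P = sum_j c_j x^j with c_j = binom(2j, j) / 4^j, i.e. P = (1 - x)^(-1/2), and
  L = -ln (1 - x) = sum_(k>0) x^k / k. Then P L = sum_j 2 c_j O_j x^j and
  L^2 = sum_(k>0) 2 H_(k-1) x^k / k, so comparing the coefficients of x^(n+1) in (P L) L = P L^2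
  gives the identity. Both product formulas are proved formally: the two sides of each satisfy the
  same equation (1 - x) Y' = a Y + h and have the same constant term, and such an equation
  determines a formal power series.\<close>

lemma fps_nth_one_minus_X_times_deriv:
  fixes f :: "'a::comm_ring_1 fps"
  shows "fps_nth ((1 - fps_X) * fps_deriv f) k
           = of_nat (Suc k) * fps_nth f (Suc k) - of_nat k * fps_nth f k"
  by (cases k) (simp_all add: algebra_simps)

lemma fps_linear_ode_unique:
  fixes f g h :: "'a::{idom, ring_char_0} fps"
  assumes f: "(1 - fps_X) * fps_deriv f = fps_const c * f + h"
    and g: "(1 - fps_X) * fps_deriv g = fps_const c * g + h"
    and nth_0: "fps_nth f 0 = fps_nth g 0"
  shows "f = g"
proof -
  define d where "d = f - g"
  have "(1 - fps_X) * fps_deriv d = (1 - fps_X) * fps_deriv f - (1 - fps_X) * fps_deriv g"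
    by (simp add: d_def right_diff_distrib)
  also have "\<dots> = fps_const c * d"
    unfolding f g d_def by (simp add: right_diff_distrib)
  finally have d: "(1 - fps_X) * fps_deriv d = fps_const c * d" .
  have rec: "of_nat (Suc k) * fps_nth d (Suc k) = (of_nat k + c) * fps_nth d k" for k
  proof -
    have "of_nat (Suc k) * fps_nth d (Suc k) - of_nat k * fps_nth d k = c * fps_nth d k"
      using arg_cong[OF d, of "\<lambda>F. fps_nth F k"]
      by (simp only: fps_nth_one_minus_X_times_deriv fps_mult_left_const_nth)
    then show ?thesis
      by (simp add: diff_eq_eq distrib_right add.commute del: of_nat_Suc)
  qed
  have "fps_nth d k = 0" for k
  proof (induction k)
    case 0
    show ?case using nth_0 by (simp add: d_def)
  next
    case (Suc k)
    then show ?case using rec[of k] by (simp del: of_nat_Suc)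
  qed
  then show ?thesis by (simp add: d_def fps_eq_iff)
qed

lemma fps_mult_nth_Suc_if_nth_0_eq_0:
  fixes f g :: "'a::semiring_0 fps"
  assumes "fps_nth g 0 = 0"
  shows "fps_nth (f * g) (Suc n) = (\<Sum>j=0..n. fps_nth f j * fps_nth g (Suc n - j))"
  using assms by (simp add: fps_mult_nth sum.atLeast0_atMost_Suc)

lemma central_binomial_Suc:
  "Suc j * ((2 * Suc j) choose Suc j) = 2 * (2 * j + 1) * ((2 * j) choose j)"
proof -
  have "Suc j * (Suc j * (Suc (Suc (2 * j)) choose Suc j))
      = Suc j * (Suc (Suc (2 * j)) * (Suc (2 * j) choose j))"
    by (simp only: Suc_times_binomial)
  also have "\<dots> = Suc (Suc (2 * j)) * ((Suc (2 * j) choose Suc j) * Suc j)"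
    using binomial_symmetric[of j "Suc (2 * j)"] by simp
  also have "\<dots> = Suc j * (2 * (2 * j + 1) * ((2 * j) choose j))"
    by (simp only: Suc_times_binomial_eq[symmetric]) simp
  finally have "Suc j * (Suc (Suc (2 * j)) choose Suc j) = 2 * (2 * j + 1) * ((2 * j) choose j)"
    using mult_left_cancel[of "Suc j"] by blast
  moreover have "2 * Suc j = Suc (Suc (2 * j))" by simp
  ultimately show ?thesis by simp
qed

definition central_binomial_fps :: "real fps" where
  "central_binomial_fps = Abs_fps (\<lambda>j. real ((2 * j) choose j) / 4 ^ j)"

text \<open>Here and in harmonic_fps the constant coefficient is 0 because x / 0 = 0.\<close>
definition neg_ln_fps :: "real fps" where
  "neg_ln_fps = Abs_fps (\<lambda>k. 1 / real k)"

definition odd_harmonic_fps :: "real fps" where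
  "odd_harmonic_fps = Abs_fps (\<lambda>j. 2 * fps_nth central_binomial_fps j * oharm j)"

definition harmonic_fps :: "real fps" where
  "harmonic_fps = Abs_fps (\<lambda>k. 2 * harm (k - 1) / real k)"

lemma central_binomial_fps_nth_Suc:
  "real (Suc j) * fps_nth central_binomial_fps (Suc j)
     = (real j + 1 / 2) * fps_nth central_binomial_fps j"
proof -
  have "real (Suc j) * real ((2 * Suc j) choose Suc j)
      = 2 * (2 * real j + 1) * real ((2 * j) choose j)"
    using arg_cong[OF central_binomial_Suc[of j], of real] by (simp only: of_nat_mult) simp
  then show ?thesis
    by (simp del: binomial_Suc_Suc add: central_binomial_fps_def field_simps)
qed

lemma central_binomial_fps_ode:
  "(1 - fps_X) * fps_deriv central_binomial_fps = fps_const (1 / 2) * central_binomial_fps"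
proof (rule fps_ext)
  fix k
  show "fps_nth ((1 - fps_X) * fps_deriv central_binomial_fps) k
      = fps_nth (fps_const (1 / 2) * central_binomial_fps) k"
    using central_binomial_fps_nth_Suc[of k]
    by (simp add: fps_nth_one_minus_X_times_deriv algebra_simps)
qed

lemma neg_ln_fps_ode: "(1 - fps_X) * fps_deriv neg_ln_fps = 1"
  by (rule fps_ext) (simp add: fps_nth_one_minus_X_times_deriv neg_ln_fps_def)

lemma odd_harmonic_fps_ode:
  "(1 - fps_X) * fps_deriv odd_harmonic_fps
     = fps_const (1 / 2) * odd_harmonic_fps + central_binomial_fps"
proof (rule fps_ext)
  fix k
  let ?c = "fps_nth central_binomial_fps"
  have oharm_Suc: "oharm (Suc k) = oharm k + 1 / (2 * real k + 1)"
    by (simp add: oharm_def)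
  have "real (Suc k) * (2 * ?c (Suc k) * oharm (Suc k))
      = 2 * (real (Suc k) * ?c (Suc k)) * oharm (Suc k)"
    by simp
  also have "\<dots> = (2 * real k + 1) * ?c k * oharm (Suc k)"
    unfolding central_binomial_fps_nth_Suc by (simp add: algebra_simps)
  also have "\<dots> = (2 * real k + 1) * ?c k * oharm k + ?c k"
    unfolding oharm_Suc by (simp add: field_simps)
  finally show "fps_nth ((1 - fps_X) * fps_deriv odd_harmonic_fps) k
      = fps_nth (fps_const (1 / 2) * odd_harmonic_fps + central_binomial_fps) k"
    by (simp add: fps_nth_one_minus_X_times_deriv odd_harmonic_fps_def algebra_simps)
qed

lemma harmonic_fps_ode: "(1 - fps_X) * fps_deriv harmonic_fps = 2 * neg_ln_fps"
proof (rule fps_ext)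
  fix k
  have "real (Suc k) * (2 * harm k / real (Suc k)) - real k * (2 * harm (k - 1) / real k)
      = 2 / real k"
  proof (cases k)
    case (Suc m)
    have "real (Suc k) * (2 * harm k / real (Suc k)) = 2 * harm k"
      by (simp del: of_nat_Suc)
    moreover have "real k * (2 * harm (k - 1) / real k) = 2 * harm m"
      using Suc by simp
    moreover have "harm k = harm m + 1 / real k"
      using Suc by (simp add: harm_Suc divide_inverse)
    ultimately show ?thesis
      by (simp add: algebra_simps)
  qed (simp add: harm_expand)
  then show "fps_nth ((1 - fps_X) * fps_deriv harmonic_fps) k = fps_nth (2 * neg_ln_fps) k"
    by (simp add: fps_nth_one_minus_X_times_deriv harmonic_fps_def neg_ln_fps_def numeral_fps_const)
qed

lemma central_binomial_fps_times_neg_ln_fps: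
  "central_binomial_fps * neg_ln_fps = odd_harmonic_fps"
proof (rule fps_linear_ode_unique[OF _ odd_harmonic_fps_ode])
  have "(1 - fps_X) * fps_deriv (central_binomial_fps * neg_ln_fps)
      = ((1 - fps_X) * fps_deriv central_binomial_fps) * neg_ln_fps
        + central_binomial_fps * ((1 - fps_X) * fps_deriv neg_ln_fps)"
    by (simp add: algebra_simps)
  then show "(1 - fps_X) * fps_deriv (central_binomial_fps * neg_ln_fps)
      = fps_const (1 / 2) * (central_binomial_fps * neg_ln_fps) + central_binomial_fps"
    by (simp add: central_binomial_fps_ode neg_ln_fps_ode mult.assoc)
next
  show "fps_nth (central_binomial_fps * neg_ln_fps) 0 = fps_nth odd_harmonic_fps 0"
    by (simp add: neg_ln_fps_def odd_harmonic_fps_def oharm_def)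
qed

lemma neg_ln_fps_squared: "neg_ln_fps * neg_ln_fps = harmonic_fps"
proof (rule fps_linear_ode_unique[where c = 0 and h = "2 * neg_ln_fps"])
  have "(1 - fps_X) * fps_deriv (neg_ln_fps * neg_ln_fps)
      = 2 * neg_ln_fps * ((1 - fps_X) * fps_deriv neg_ln_fps)"
    by (simp add: algebra_simps)
  then show "(1 - fps_X) * fps_deriv (neg_ln_fps * neg_ln_fps)
      = fps_const 0 * (neg_ln_fps * neg_ln_fps) + 2 * neg_ln_fps"
    by (simp add: neg_ln_fps_ode)
next
  show "(1 - fps_X) * fps_deriv harmonic_fps = fps_const 0 * harmonic_fps + 2 * neg_ln_fps"
    by (simp add: harmonic_fps_ode)
next
  show "fps_nth (neg_ln_fps * neg_ln_fps) 0 = fps_nth harmonic_fps 0"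
    by (simp add: neg_ln_fps_def harmonic_fps_def)
qed

lemma central_binomial_harmonic_sum_eq_fps_nth:
  "(\<Sum>j=0..n. real ((2*j) choose j) * (oharm j - harm (n - j)) / (4 ^ j * real (n + 1 - j)))
     = (fps_nth (odd_harmonic_fps * neg_ln_fps) (Suc n)
        - fps_nth (central_binomial_fps * harmonic_fps) (Suc n)) / 2"
proof -
  have L0: "fps_nth neg_ln_fps 0 = 0" and R0: "fps_nth harmonic_fps 0 = 0"
    by (simp_all add: neg_ln_fps_def harmonic_fps_def)
  have term_eq: "real ((2*j) choose j) * (oharm j - harm (n - j)) / (4 ^ j * real (n + 1 - j))
      = (fps_nth odd_harmonic_fps j * fps_nth neg_ln_fps (Suc n - j)
         - fps_nth central_binomial_fps j * fps_nth harmonic_fps (Suc n - j)) / 2"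
    if "j \<le> n" for j
  proof -
    from that have "n + 1 - j = Suc (n - j)" "Suc n - j = Suc (n - j)"
      by simp_all
    then show ?thesis
      by (simp add: odd_harmonic_fps_def neg_ln_fps_def central_binomial_fps_def
          harmonic_fps_def diff_divide_distrib right_diff_distrib)
  qed
  have "(\<Sum>j=0..n. real ((2*j) choose j) * (oharm j - harm (n - j)) / (4 ^ j * real (n + 1 - j)))
      = (\<Sum>j=0..n. (fps_nth odd_harmonic_fps j * fps_nth neg_ln_fps (Suc n - j)
         - fps_nth central_binomial_fps j * fps_nth harmonic_fps (Suc n - j)) / 2)"
    by (rule sum.cong[OF refl], rule term_eq) simp
  also have "\<dots> = ((\<Sum>j=0..n. fps_nth odd_harmonic_fps j * fps_nth neg_ln_fps (Suc n - j))
      - (\<Sum>j=0..n. fps_nth central_binomial_fps j * fps_nth harmonic_fps (Suc n - j))) / 2"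
    by (simp only: sum_divide_distrib[symmetric] sum_subtractf)
  also have "\<dots> = (fps_nth (odd_harmonic_fps * neg_ln_fps) (Suc n)
      - fps_nth (central_binomial_fps * harmonic_fps) (Suc n)) / 2"
    by (simp only: fps_mult_nth_Suc_if_nth_0_eq_0[OF L0] fps_mult_nth_Suc_if_nth_0_eq_0[OF R0])
  finally show ?thesis .
qed

theorem corollary5:
  fixes n :: nat
  shows "(\<Sum>j=0..n. real ((2*j) choose j) * (oharm j - harm (n - j))
            / (4 ^ j * real (n + 1 - j))) = 0"
proof -
  have "odd_harmonic_fps * neg_ln_fps = central_binomial_fps * neg_ln_fps * neg_ln_fps"
    by (simp only: central_binomial_fps_times_neg_ln_fps)
  also have "\<dots> = central_binomial_fps * harmonic_fps"
    by (simp only: mult.assoc neg_ln_fps_squared)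
  finally have "odd_harmonic_fps * neg_ln_fps = central_binomial_fps * harmonic_fps" .
  then show ?thesis
    unfolding central_binomial_harmonic_sum_eq_fps_nth by (simp only: diff_self div_0)
qed

end
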